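(* Let $C$ be the cube in $\mathbb{R}^3$, with its $8$ vertices and $12$ edges, and let $G_C$ be its rotation group (isomorphic to $S_4$, of order $24$). The number of $G_C$-orbits of incomplete open cubes (as defined in the context) is exactly $122$.
   Context: Let $P$ be a convex polyhedron in $\mathbb{R}^3$ with vertex set $V$ and edge set $E$ (each edge a pair of vertices). For a subset $S\subseteq E$, let $V(S)$ be the set of vertices incident to at least one edge of $S$, and let $\Gamma(S)$ be the graph with vertex set $V(S)$ and edge set $S$. An incomplete open $P$ is a subset $S\subseteq E$ such that: (i) $S\neq\emptyset$ and $S\neq E$; (ii) $\Gamma(S)$ is connected; (iii) $S$ is non-planar, i.e. the points of $V(S)$ (as points of $\mathbb{R}^3$) are not all contained in a single affine plane. The rotation group of $P$ (orientation-preserving isometries of $\mathbb{R}^3$ mapping $P$ to itself) permutes $V$ and $E$, and hence acts on subsets of $E$; this action preserves the property of being an incomplete open $P$. Incomplete open $P$ are counted up to this action, i.e. one counts orbits; two mirror-image subsets not related by a rotation are counted separately. *)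

theory Defs
  imports "HOL-Analysis.Analysis"
begin

definition cube_V :: "(real^3) set" where
  "cube_V = {v. \<forall>i. v$i = 1 \<or> v$i = -1}"

definition cube_E :: "(real^3) set set" where
  "cube_E = {{u, v} | u v. u \<in> cube_V \<and> v \<in> cube_V \<and> dist u v = 2}"

definition cube_P :: "(real^3) set" where
  "cube_P = convex hull cube_V"

definition rot_group :: "(real^3 \<Rightarrow> real^3) set" where
  "rot_group = {f. (\<exists>A b. orthogonal_matrix (A :: real^3^3) \<and> det A = 1 \<and>
                        (\<forall>x. f x = A *v x + b)) \<and> f ` cube_P = cube_P}"

definition incident_vertices :: "(real^3) set set \<Rightarrow> (real^3) set" where
  "incident_vertices S = \<Union>S"

definition edge_graph_connected :: "(real^3) set set \<Rightarrow> bool" where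
  "edge_graph_connected S =
     (\<forall>u \<in> incident_vertices S. \<forall>v \<in> incident_vertices S.
        (u, v) \<in> {(x, y). {x, y} \<in> S}\<^sup>*)"

definition non_planar :: "(real^3) set set \<Rightarrow> bool" where
  "non_planar S = (\<not> (\<exists>a c. a \<noteq> 0 \<and> incident_vertices S \<subseteq> {x. a \<bullet> x = c}))"

definition incomplete_open_cube :: "(real^3) set set \<Rightarrow> bool" where
  "incomplete_open_cube S =
     (S \<subseteq> cube_E \<and> S \<noteq> {} \<and> S \<noteq> cube_E \<and> edge_graph_connected S \<and> non_planar S)"

definition edge_act :: "(real^3 \<Rightarrow> real^3) \<Rightarrow> (real^3) set set \<Rightarrow> (real^3) set set" where
  "edge_act f S = (\<lambda>e. f ` e) ` S"

definition rot_orbit :: "(real^3) set set \<Rightarrow> (real^3) set set set" where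
  "rot_orbit S = {edge_act f S | f. f \<in> rot_group}"

end

theory Submission
  imports Defs "HOL-Library.List_Lexorder"
begin

text \<open>A rotation of the cube permutes the vertices, i.e. the extreme points of the solid cube; hence
  it fixes their barycentre \<open>0\<close> and is given by a signed permutation matrix of determinant \<open>1\<close>.
  So the rotation group consists of 24 explicit matrices, acting on the 12 edges by explicit
  permutations. Encoding edge sets as bit vectors of length 12, the remaining conditions become
  decidable: connectivity by iterated neighbourhoods of one vertex, non-planarity by the presence
  of one of the 58 non-coplanar quadruples of vertices, since any other set of vertices lies in one
  of 12 planes or has at most three points. Each orbit contains exactly one lexicographically least
  bit vector, and counting the least representatives of incomplete open cubes among all 4096 bit
  vectors gives 122.\<close>

section \<open>Coordinates of the cube\<close>

text \<open>Coordinate \<open>k + 1\<close> of \<open>cube_vertices ! i\<close> is \<open>1\<close> iff bit \<open>k\<close> of \<open>i\<close> is set.\<close>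

definition cube_vertices :: "(real^3) list" where
  "cube_vertices = [vector[-1,-1,-1], vector[1,-1,-1], vector[-1,1,-1], vector[1,1,-1],
    vector[-1,-1,1], vector[1,-1,1], vector[-1,1,1], vector[1,1,1]]"

definition cube_edges :: "(nat \<times> nat) list" where
  "cube_edges = [(0,1),(0,2),(0,4),(1,3),(1,5),(2,3),(2,6),(3,7),(4,5),(4,6),(5,7),(6,7)]"

definition cube_edge :: "nat \<Rightarrow> (real^3) set" where
  "cube_edge k = {cube_vertices ! fst (cube_edges ! k), cube_vertices ! snd (cube_edges ! k)}"

lemma nat_less_8_iff:
  "(i::nat) < 8 \<longleftrightarrow> i = 0 \<or> i = 1 \<or> i = 2 \<or> i = 3 \<or> i = 4 \<or> i = 5 \<or> i = 6 \<or> i = 7"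
  by auto

lemma nat_less_12_iff:
  "(i::nat) < 12 \<longleftrightarrow> i = 0 \<or> i = 1 \<or> i = 2 \<or> i = 3 \<or> i = 4 \<or> i = 5 \<or> i = 6 \<or> i = 7 \<or>
     i = 8 \<or> i = 9 \<or> i = 10 \<or> i = 11"
  by presburger

lemma nat_less_24_iff:
  "(i::nat) < 24 \<longleftrightarrow> i = 0 \<or> i = 1 \<or> i = 2 \<or> i = 3 \<or> i = 4 \<or> i = 5 \<or> i = 6 \<or> i = 7 \<or>
     i = 8 \<or> i = 9 \<or> i = 10 \<or> i = 11 \<or> i = 12 \<or> i = 13 \<or> i = 14 \<or> i = 15 \<or>
     i = 16 \<or> i = 17 \<or> i = 18 \<or> i = 19 \<or> i = 20 \<or> i = 21 \<or> i = 22 \<or> i = 23"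
  by presburger

lemma vec3_eq_iff: "(x::'a^3) = y \<longleftrightarrow> x$1 = y$1 \<and> x$2 = y$2 \<and> x$3 = y$3"
  by (simp add: vec_eq_iff forall_3)

lemma length_cube_vertices [simp]: "length cube_vertices = 8"
  by (simp add: cube_vertices_def)

lemma length_cube_edges [simp]: "length cube_edges = 12"
  by (simp add: cube_edges_def)

lemma cube_vertices_nth_eq_iff:
  "i < 8 \<Longrightarrow> j < 8 \<Longrightarrow> cube_vertices ! i = cube_vertices ! j \<longleftrightarrow> i = j"
  unfolding nat_less_8_iff by (auto simp: cube_vertices_def vec3_eq_iff)

lemma cube_V_eq: "cube_V = set cube_vertices"
proof
  show "set cube_vertices \<subseteq> cube_V"
    by (auto simp: cube_vertices_def cube_V_def forall_3)
  show "cube_V \<subseteq> set cube_vertices"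
  proof
    fix v assume "v \<in> cube_V"
    then have "\<forall>i. v$i = 1 \<or> v$i = -1" by (simp add: cube_V_def)
    from this[rule_format, of 1] this[rule_format, of 2] this[rule_format, of 3]
    show "v \<in> set cube_vertices" by (auto simp: cube_vertices_def vec3_eq_iff)
  qed
qed

lemma finite_cube_V: "finite cube_V"
  by (simp add: cube_V_eq)

lemma cube_edges_nth_bounds:
  "k < 12 \<Longrightarrow> fst (cube_edges ! k) < 8 \<and> snd (cube_edges ! k) < 8 \<and> fst (cube_edges ! k) \<noteq> snd (cube_edges ! k)"
  unfolding nat_less_12_iff by (elim disjE) (simp_all add: cube_edges_def)

lemma dist_vec3_eq_2_iff:
  "dist (x::real^3) y = 2 \<longleftrightarrow> (x$1 - y$1)^2 + (x$2 - y$2)^2 + (x$3 - y$3)^2 = 4"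
proof -
  have "sqrt s = 2 \<longleftrightarrow> s = 4" for s :: real
    by (metis real_sqrt_eq_iff real_sqrt_four)
  then show ?thesis
    by (simp add: dist_vec_def L2_set_def sum_3 dist_real_def)
qed

lemma dist_cube_vertices_eq_2_iff:
  "i < 8 \<Longrightarrow> j < 8 \<Longrightarrow>
    dist (cube_vertices ! i) (cube_vertices ! j) = 2 \<longleftrightarrow> (i, j) \<in> set cube_edges \<or> (j, i) \<in> set cube_edges"
  unfolding nat_less_8_iff dist_vec3_eq_2_iff
  by (elim disjE) (simp_all add: cube_vertices_def cube_edges_def)

lemma cube_E_eq: "cube_E = cube_edge ` {..<12}"
proof
  show "cube_E \<subseteq> cube_edge ` {..<12}"
  proof
    fix e assume "e \<in> cube_E"
    then obtain u v where e: "e = {u, v}" and uv: "u \<in> set cube_vertices" "v \<in> set cube_vertices" "dist u v = 2"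
      by (auto simp: cube_E_def cube_V_eq)
    then obtain i j where ij: "i < 8" "j < 8" "u = cube_vertices ! i" "v = cube_vertices ! j"
      by (metis in_set_conv_nth length_cube_vertices)
    with uv have "(i, j) \<in> set cube_edges \<or> (j, i) \<in> set cube_edges"
      using dist_cube_vertices_eq_2_iff by auto
    then obtain k where k: "k < 12" "cube_edges ! k = (i, j) \<or> cube_edges ! k = (j, i)"
      by (metis in_set_conv_nth length_cube_edges)
    then have "e = cube_edge k"
      using e ij by (auto simp: cube_edge_def)
    with k(1) show "e \<in> cube_edge ` {..<12}" by blast
  qed
  show "cube_edge ` {..<12} \<subseteq> cube_E"
  proof
    fix e assume "e \<in> cube_edge ` {..<12}"
    then obtain k where k: "k < 12" "e = cube_edge k" by auto
    obtain i j where ij: "cube_edges ! k = (i, j)" by fastforce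
    then have "i < 8" "j < 8" "(i, j) \<in> set cube_edges"
      using cube_edges_nth_bounds[OF k(1)] k(1) nth_mem[of k cube_edges] by auto
    then have "dist (cube_vertices ! i) (cube_vertices ! j) = 2"
      "cube_vertices ! i \<in> cube_V" "cube_vertices ! j \<in> cube_V"
      using dist_cube_vertices_eq_2_iff by (auto simp: cube_V_eq)
    then show "e \<in> cube_E"
      unfolding cube_E_def k(2) cube_edge_def ij by auto
  qed
qed

lemma cube_edge_eq_iff: "k < 12 \<Longrightarrow> l < 12 \<Longrightarrow> cube_edge k = cube_edge l \<longleftrightarrow> k = l"
proof -
  assume k: "k < 12" and l: "l < 12"
  have "cube_edge k = cube_edge l \<longleftrightarrow> cube_edges ! k = cube_edges ! l \<or> cube_edges ! k = prod.swap (cube_edges ! l)"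
    unfolding cube_edge_def doubleton_eq_iff
    using cube_edges_nth_bounds[OF k] cube_edges_nth_bounds[OF l] cube_vertices_nth_eq_iff
    by (auto simp: prod_eq_iff)
  also have "\<dots> \<longleftrightarrow> k = l"
    using k l unfolding nat_less_12_iff by (elim disjE) (simp_all add: cube_edges_def)
  finally show ?thesis .
qed

lemma inj_on_cube_edge: "inj_on cube_edge {..<12}"
  by (auto intro: inj_onI simp: cube_edge_eq_iff)

section \<open>The rotation group\<close>

definition rotation_matrices :: "(real^3^3) list" where
  "rotation_matrices = [vector[vector[1,0,0],vector[0,1,0],vector[0,0,1]],
    vector[vector[1,0,0],vector[0,-1,0],vector[0,0,-1]],
    vector[vector[-1,0,0],vector[0,1,0],vector[0,0,-1]],
    vector[vector[-1,0,0],vector[0,-1,0],vector[0,0,1]],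
    vector[vector[1,0,0],vector[0,0,1],vector[0,-1,0]],
    vector[vector[1,0,0],vector[0,0,-1],vector[0,1,0]],
    vector[vector[-1,0,0],vector[0,0,1],vector[0,1,0]],
    vector[vector[-1,0,0],vector[0,0,-1],vector[0,-1,0]],
    vector[vector[0,1,0],vector[1,0,0],vector[0,0,-1]],
    vector[vector[0,1,0],vector[-1,0,0],vector[0,0,1]],
    vector[vector[0,-1,0],vector[1,0,0],vector[0,0,1]],
    vector[vector[0,-1,0],vector[-1,0,0],vector[0,0,-1]],
    vector[vector[0,1,0],vector[0,0,1],vector[1,0,0]],
    vector[vector[0,1,0],vector[0,0,-1],vector[-1,0,0]],
    vector[vector[0,-1,0],vector[0,0,1],vector[-1,0,0]],
    vector[vector[0,-1,0],vector[0,0,-1],vector[1,0,0]],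
    vector[vector[0,0,1],vector[1,0,0],vector[0,1,0]],
    vector[vector[0,0,1],vector[-1,0,0],vector[0,-1,0]],
    vector[vector[0,0,-1],vector[1,0,0],vector[0,-1,0]],
    vector[vector[0,0,-1],vector[-1,0,0],vector[0,1,0]],
    vector[vector[0,0,1],vector[0,1,0],vector[-1,0,0]],
    vector[vector[0,0,1],vector[0,-1,0],vector[1,0,0]],
    vector[vector[0,0,-1],vector[0,1,0],vector[1,0,0]],
    vector[vector[0,0,-1],vector[0,-1,0],vector[-1,0,0]]]"



definition rotation_edge_perms :: "nat list list" where
  "rotation_edge_perms = [[0,1,2,3,4,5,6,7,8,9,10,11],
    [11,9,6,10,7,8,2,4,5,1,3,0],
    [8,10,4,9,2,11,7,6,0,3,1,5],
    [5,3,7,1,6,0,4,2,11,10,9,8],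
    [8,2,9,4,10,0,1,3,11,6,7,5],
    [5,6,1,7,3,11,9,10,0,2,4,8],
    [0,4,3,2,1,8,10,9,5,7,6,11],
    [11,7,10,6,9,5,3,1,8,4,2,0],
    [9,8,2,11,6,10,4,7,1,0,5,3],
    [1,5,6,0,2,3,7,4,9,11,8,10],
    [3,0,4,5,7,1,2,6,10,8,11,9],
    [10,11,7,8,4,9,6,2,3,5,0,1],
    [2,0,1,8,9,4,3,10,6,5,11,7],
    [6,11,9,5,1,7,10,3,2,8,0,4],
    [4,8,10,0,3,2,9,1,7,11,5,6],
    [7,5,3,11,10,6,1,9,4,0,8,2],
    [1,2,0,6,5,9,8,11,3,4,7,10],
    [9,6,11,2,8,1,5,0,10,7,4,3],
    [10,4,8,7,11,3,0,5,9,2,6,1],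
    [3,7,5,4,0,10,11,8,1,6,2,9],
    [2,9,8,1,0,6,11,5,4,10,3,7],
    [6,1,5,9,11,2,0,8,7,3,10,4],
    [4,3,0,10,8,7,5,11,2,1,9,6],
    [7,10,11,3,5,4,8,0,6,9,1,2]]"

lemma length_rotation_matrices [simp]: "length rotation_matrices = 24"
  by (simp add: rotation_matrices_def)

lemma length_rotation_edge_perms [simp]: "length rotation_edge_perms = 24"
  by (simp add: rotation_edge_perms_def)

lemma matrix_vector_mult_3:
  "(A::real^3^3) *v x = vector[A$1$1*x$1 + A$1$2*x$2 + A$1$3*x$3,
     A$2$1*x$1 + A$2$2*x$2 + A$2$3*x$3, A$3$1*x$1 + A$3$2*x$2 + A$3$3*x$3]"
  by (simp add: vec3_eq_iff matrix_vector_mult_def sum_3)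

lemma matrix_matrix_mult_3: "(A::real^3^3) ** (B::real^3^3) = vector[
   vector[A$1$1*B$1$1 + A$1$2*B$2$1 + A$1$3*B$3$1, A$1$1*B$1$2 + A$1$2*B$2$2 + A$1$3*B$3$2,
     A$1$1*B$1$3 + A$1$2*B$2$3 + A$1$3*B$3$3],
   vector[A$2$1*B$1$1 + A$2$2*B$2$1 + A$2$3*B$3$1, A$2$1*B$1$2 + A$2$2*B$2$2 + A$2$3*B$3$2,
     A$2$1*B$1$3 + A$2$2*B$2$3 + A$2$3*B$3$3],
   vector[A$3$1*B$1$1 + A$3$2*B$2$1 + A$3$3*B$3$1, A$3$1*B$1$2 + A$3$2*B$2$2 + A$3$3*B$3$2,
     A$3$1*B$1$3 + A$3$2*B$2$3 + A$3$3*B$3$3]]"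
  by (simp add: vec3_eq_iff matrix_matrix_mult_def sum_3)

lemma transpose_3: "transpose (A::real^3^3) =
   vector[vector[A$1$1, A$2$1, A$3$1], vector[A$1$2, A$2$2, A$3$2], vector[A$1$3, A$2$3, A$3$3]]"
  by (simp add: vec3_eq_iff transpose_def)

lemma mat_1_3: "(mat 1 :: real^3^3) = vector[vector[1,0,0], vector[0,1,0], vector[0,0,1]]"
  by (simp add: vec3_eq_iff mat_def)

lemma rotation_matrices_orthogonal:
  "p < 24 \<Longrightarrow> orthogonal_matrix (rotation_matrices ! p) \<and> det (rotation_matrices ! p) = 1"
  unfolding nat_less_24_iff
  by (elim disjE; simp only: rotation_matrices_def nth_Cons_0 nth_Cons_numeral;
      simp add: orthogonal_matrix_def matrix_matrix_mult_3 transpose_3 mat_1_3 det_3 vec3_eq_iff)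

lemma rotation_matrices_cube_V:
  "p < 24 \<Longrightarrow> v \<in> cube_V \<Longrightarrow> rotation_matrices ! p *v v \<in> cube_V"
  unfolding nat_less_24_iff cube_V_def
  by (elim disjE; simp only: rotation_matrices_def nth_Cons_0 nth_Cons_numeral;
      auto simp: matrix_vector_mult_3 forall_3)

lemma rotation_matrices_cube_edge:
  "p < 24 \<Longrightarrow> k < 12 \<Longrightarrow>
    (\<lambda>x. rotation_matrices ! p *v x) ` cube_edge k = cube_edge (rotation_edge_perms ! p ! k)"
  unfolding nat_less_24_iff nat_less_12_iff
  by (elim disjE; simp only: rotation_matrices_def rotation_edge_perms_def nth_Cons_0 nth_Cons_numeral;
      simp add: cube_edge_def cube_edges_def cube_vertices_def matrix_vector_mult_3 doubleton_eq_iff vec3_eq_iff)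

definition signed_unit_triples :: "(real \<times> real \<times> real) set" where
  "signed_unit_triples = {(1,0,0), (-1,0,0), (0,1,0), (0,-1,0), (0,0,1), (0,0,-1)}"

lemma sign_preserving_triple_signed_unit:
  fixes x y z :: real
  assumes "\<And>t1 t2 t3. t1 \<in> {1,-1} \<Longrightarrow> t2 \<in> {1,-1} \<Longrightarrow> t3 \<in> {1,-1} \<Longrightarrow>
    x * t1 + y * t2 + z * t3 \<in> {1,-1}"
  shows "(x, y, z) \<in> signed_unit_triples"
proof -
  have h1: "x + y + z \<in> {1,-1}" using assms[of 1 1 1] by simp
  have h2: "x + y - z \<in> {1,-1}" using assms[of 1 1 "-1"] by simp
  have h3: "x - y + z \<in> {1,-1}" using assms[of 1 "-1" 1] by simp
  have h4: "-x + y + z \<in> {1,-1}" using assms[of "-1" 1 1] by simp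
  have h5: "x - y - z \<in> {1,-1}" using assms[of 1 "-1" "-1"] by simp
  have h6: "-x + y - z \<in> {1,-1}" using assms[of "-1" 1 "-1"] by simp
  have h7: "-x - y + z \<in> {1,-1}" using assms[of "-1" "-1" 1] by simp
  have x: "x = 1 \<or> x = 0 \<or> x = -1" using h1 h5 by auto
  have y: "y = 1 \<or> y = 0 \<or> y = -1" using h1 h6 by auto
  have z: "z = 1 \<or> z = 0 \<or> z = -1" using h1 h7 by auto
  show ?thesis
    using x y z h1 h2 h3 h4 unfolding signed_unit_triples_def by (elim disjE) simp_all
qed

lemma signed_unit_rows_det_1_in_rotation_matrices:
  fixes a11 a12 a13 a21 a22 a23 a31 a32 a33 :: real
  assumes "(a11,a12,a13) \<in> signed_unit_triples" "(a21,a22,a23) \<in> signed_unit_triples"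
    "(a31,a32,a33) \<in> signed_unit_triples"
    and "a11 * a22 * a33 + a12 * a23 * a31 + a13 * a21 * a32
       - a11 * a23 * a32 - a12 * a21 * a33 - a13 * a22 * a31 = 1"
  shows "vector[vector[a11,a12,a13], vector[a21,a22,a23], vector[a31,a32,a33]] \<in> set rotation_matrices"
  using assms unfolding signed_unit_triples_def
  apply (simp only: insert_iff empty_iff prod.inject)
  apply (elim disjE conjE; simp only: ; simp add: rotation_matrices_def vec3_eq_iff)
  done

lemma cube_P_subset_box: "cube_P \<subseteq> cbox (-1) 1"
  unfolding cube_P_def
proof (rule hull_minimal)
  show "cube_V \<subseteq> cbox (-1) 1"
  proof
    fix v assume "v \<in> cube_V"
    then have v_sign: "v$i = 1 \<or> v$i = -1" for i by (simp add: cube_V_def)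
    show "v \<in> cbox (-1) 1"
      unfolding mem_box_cart
    proof
      fix i show "(-1)$i \<le> v$i \<and> v$i \<le> (1::real^3)$i"
        using v_sign[of i] by auto
    qed
  qed
qed (rule convex_box)

lemma inner_cube_vertex_le:
  assumes v: "v \<in> cube_V" and x: "x \<in> cube_P"
  shows "v \<bullet> x \<le> 3" and "v \<bullet> x = 3 \<Longrightarrow> x = v"
proof -
  have v_sign: "v$i = 1 \<or> v$i = -1" for i using v by (simp add: cube_V_def)
  have x_box: "-1 \<le> x$i \<and> x$i \<le> 1" for i using x cube_P_subset_box by (force simp: mem_box_cart)
  have le: "v$i * x$i \<le> 1" for i using v_sign[of i] x_box[of i] by auto
  have inner: "v \<bullet> x = v$1 * x$1 + v$2 * x$2 + v$3 * x$3" by (simp add: inner_vec_def sum_3)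
  show "v \<bullet> x \<le> 3" using le[of 1] le[of 2] le[of 3] inner by linarith
  assume "v \<bullet> x = 3"
  then have "v$1 * x$1 = 1" "v$2 * x$2 = 1" "v$3 * x$3 = 1"
    using le[of 1] le[of 2] le[of 3] inner by linarith+
  moreover have "v$i * x$i = 1 \<Longrightarrow> x$i = v$i" for i
    using v_sign[of i] by auto
  ultimately show "x = v" unfolding vec3_eq_iff by simp
qed

lemma cube_vertex_extreme_point:
  assumes v: "v \<in> cube_V" shows "v extreme_point_of cube_P"
proof (rule extreme_point_of_Int_supporting_hyperplane_le)
  have "v \<in> cube_P" unfolding cube_P_def using v by (rule hull_inc)
  moreover have "v \<bullet> v = 3"
  proof -
    have "v$i * v$i = 1" for i
    proof -
      have "v$i = 1 \<or> v$i = -1" using v by (simp add: cube_V_def)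
      then show ?thesis by auto
    qed
    then show ?thesis by (simp add: inner_vec_def sum_3)
  qed
  ultimately show "cube_P \<inter> {x. v \<bullet> x = 3} = {v}"
    using inner_cube_vertex_le(2)[OF v] by auto
  show "\<And>x. x \<in> cube_P \<Longrightarrow> v \<bullet> x \<le> 3"
    using inner_cube_vertex_le(1)[OF v] .
qed

lemma extreme_point_of_affine_image:
  fixes g :: "'a::real_vector \<Rightarrow> 'b::real_vector"
  assumes "linear g" "inj g"
  shows "(b + g x) extreme_point_of (\<lambda>x. b + g x) ` S \<longleftrightarrow> x extreme_point_of S"
proof -
  have "(\<lambda>x. b + g x) ` S = (\<lambda>y. b + y) ` (g ` S)" by (simp add: image_image)
  then have "(b + g x) extreme_point_of (\<lambda>x. b + g x) ` S \<longleftrightarrow> g x extreme_point_of g ` S"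
    by (simp add: extreme_point_of_translation_eq)
  also have "\<dots> \<longleftrightarrow> x extreme_point_of S"
    using face_of_linear_image[OF assms, of "{x}" S] by (simp add: face_of_singleton)
  finally show ?thesis .
qed

lemma orthogonal_matrix_transpose_mult_cancel:
  "orthogonal_matrix (A::real^'n^'n) \<Longrightarrow> transpose A *v (A *v x) = x"
  by (simp add: orthogonal_matrix_def matrix_vector_mul_assoc)

lemma inj_orthogonal_matrix_mult:
  "orthogonal_matrix (A::real^'n^'n) \<Longrightarrow> inj (\<lambda>x. A *v x)"
  by (metis (no_types, lifting) injI orthogonal_matrix_transpose_mult_cancel)

lemma rot_group_inj:
  assumes "f \<in> rot_group" shows "inj f"
proof (rule injI)
  obtain A :: "real^3^3" and b where A: "orthogonal_matrix A" and f: "\<And>x. f x = A *v x + b"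
    using assms unfolding rot_group_def by blast
  fix x y assume "f x = f y"
  then have "A *v x = A *v y" by (simp add: f)
  then show "x = y" by (rule injD[OF inj_orthogonal_matrix_mult[OF A]])
qed

lemma rot_group_image_cube_V:
  assumes "f \<in> rot_group" shows "f ` cube_V = cube_V"
proof -
  obtain A :: "real^3^3" and b where A: "orthogonal_matrix A"
    and f_affine: "\<And>x. f x = A *v x + b" and fP: "f ` cube_P = cube_P"
    using assms unfolding rot_group_def by blast
  have f: "f = (\<lambda>x. b + A *v x)" by (simp add: fun_eq_iff f_affine add.commute)
  have "f v \<in> cube_V" if "v \<in> cube_V" for v
  proof -
    have "f v extreme_point_of f ` cube_P"
      unfolding f using extreme_point_of_affine_image[OF matrix_vector_mul_linear inj_orthogonal_matrix_mult[OF A]]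
        cube_vertex_extreme_point[OF that] by blast
    then show ?thesis
      unfolding fP unfolding cube_P_def by (rule extreme_point_of_convex_hull)
  qed
  then have "f ` cube_V \<subseteq> cube_V" by blast
  then show ?thesis
    using endo_inj_surj finite_cube_V inj_on_subset[OF rot_group_inj[OF assms] subset_UNIV] by blast
qed

lemma distinct_cube_vertices: "distinct cube_vertices"
  by (simp add: cube_vertices_def vec3_eq_iff)

lemma card_cube_V: "card cube_V = 8"
  using distinct_cube_vertices by (simp add: cube_V_eq distinct_card)

lemma sum_cube_V: "(\<Sum>v\<in>cube_V. v) = 0"
proof -
  have "(\<Sum>v\<in>cube_V. v) = sum_list cube_vertices"
    using sum_list_distinct_conv_sum_set[OF distinct_cube_vertices, of id] by (simp add: cube_V_eq)
  also have "\<dots> = 0" by (simp add: cube_vertices_def vec3_eq_iff)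
  finally show ?thesis .
qed

text \<open>The vertices are permuted and sum to \<open>0\<close>, so the translation part vanishes.\<close>
lemma rot_group_linear:
  assumes "f \<in> rot_group"
  obtains A :: "real^3^3" where "orthogonal_matrix A" "det A = 1" "f = (\<lambda>x. A *v x)"
proof -
  obtain A :: "real^3^3" and b where A: "orthogonal_matrix A" "det A = 1"
    and f: "\<And>x. f x = A *v x + b"
    using assms unfolding rot_group_def by blast
  have "(\<Sum>v\<in>cube_V. f v) = (\<Sum>v\<in>f ` cube_V. v)"
    using rot_group_inj[OF assms] by (simp add: sum.reindex inj_on_subset)
  also have "\<dots> = 0"
    by (simp add: rot_group_image_cube_V[OF assms] sum_cube_V)
  moreover have "(\<Sum>v\<in>cube_V. f v) = A *v (\<Sum>v\<in>cube_V. v) + (\<Sum>v\<in>cube_V. b)"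
    by (simp add: f sum.distrib real_vector.linear_sum[OF matrix_vector_mul_linear])
  moreover have "(\<Sum>v\<in>cube_V. b) = 8 *\<^sub>R b"
    by (simp only: sum_constant_scaleR card_cube_V) simp
  ultimately have "b = 0" by (simp add: sum_cube_V)
  with A f that show thesis by auto
qed

lemma rot_group_iff: "f \<in> rot_group \<longleftrightarrow> (\<exists>p<24. f = (\<lambda>x. rotation_matrices ! p *v x))"
proof
  assume f: "f \<in> rot_group"
  then obtain A :: "real^3^3" where A: "orthogonal_matrix A" "det A = 1" "f = (\<lambda>x. A *v x)"
    by (rule rot_group_linear)
  have row: "(A$i$1, A$i$2, A$i$3) \<in> signed_unit_triples" for i
  proof (rule sign_preserving_triple_signed_unit)
    fix t1 t2 t3 :: real assume "t1 \<in> {1,-1}" "t2 \<in> {1,-1}" "t3 \<in> {1,-1}"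
    then have "vector[t1,t2,t3] \<in> cube_V" by (auto simp: cube_V_def forall_3)
    then have "A *v vector[t1,t2,t3] \<in> cube_V"
      using rot_group_image_cube_V[OF f] A(3) by blast
    then show "A$i$1 * t1 + A$i$2 * t2 + A$i$3 * t3 \<in> {1,-1}"
      by (simp add: cube_V_def matrix_vector_mult_def sum_3)
  qed
  have "A = vector[vector[A$1$1,A$1$2,A$1$3], vector[A$2$1,A$2$2,A$2$3], vector[A$3$1,A$3$2,A$3$3]]"
    by (simp add: vec3_eq_iff)
  also have "\<dots> \<in> set rotation_matrices"
    using A(2) by (intro signed_unit_rows_det_1_in_rotation_matrices[OF row row row]) (simp add: det_3)
  finally show "\<exists>p<24. f = (\<lambda>x. rotation_matrices ! p *v x)"
    using A(3) by (metis in_set_conv_nth length_rotation_matrices)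
next
  assume "\<exists>p<24. f = (\<lambda>x. rotation_matrices ! p *v x)"
  then obtain p where p: "p < 24" and f: "f = (\<lambda>x. rotation_matrices ! p *v x)" by blast
  have inj: "inj f"
    using inj_orthogonal_matrix_mult rotation_matrices_orthogonal[OF p] f by blast
  have "f ` cube_V \<subseteq> cube_V" using rotation_matrices_cube_V[OF p] f by blast
  then have "f ` cube_V = cube_V"
    using endo_inj_surj[OF finite_cube_V _ inj_on_subset[OF inj subset_UNIV]] by blast
  then have "f ` cube_P = cube_P"
    unfolding cube_P_def f by (simp add: convex_hull_linear_image)
  then show "f \<in> rot_group"
    unfolding rot_group_def using rotation_matrices_orthogonal[OF p] f by force
qed

lemma rot_group_comp:
  assumes "f \<in> rot_group" and "g \<in> rot_group" shows "f \<circ> g \<in> rot_group"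
proof -
  obtain A b where A: "orthogonal_matrix (A::real^3^3)" "det A = 1" "\<And>x. f x = A *v x + b"
    "f ` cube_P = cube_P"
    using assms(1) unfolding rot_group_def by blast
  obtain B c where B: "orthogonal_matrix (B::real^3^3)" "det B = 1" "\<And>x. g x = B *v x + c"
    "g ` cube_P = cube_P"
    using assms(2) unfolding rot_group_def by blast
  have "\<forall>x. (f \<circ> g) x = (A ** B) *v x + (A *v c + b)"
    by (simp add: A(3) B(3) matrix_vector_right_distrib matrix_vector_mul_assoc)
  moreover have "orthogonal_matrix (A ** B)" using A(1) B(1) by (rule orthogonal_matrix_mul)
  moreover have "det (A ** B) = 1" using A(2) B(2) by (simp add: det_mul)
  moreover have "(f \<circ> g) ` cube_P = cube_P" using A(4) B(4) by (metis image_comp)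
  ultimately show ?thesis unfolding rot_group_def by blast
qed

lemma rot_group_inverse:
  assumes "f \<in> rot_group" obtains g where "g \<in> rot_group" "\<And>x. g (f x) = x"
proof -
  obtain A b where A: "orthogonal_matrix (A::real^3^3)" "det A = 1" "\<And>x. f x = A *v x + b"
    "f ` cube_P = cube_P"
    using assms unfolding rot_group_def by blast
  define g where "g x = transpose A *v x + (- (transpose A *v b))" for x
  have gf: "g (f x) = x" for x
    using orthogonal_matrix_transpose_mult_cancel[OF A(1)]
    by (simp add: g_def A(3) matrix_vector_right_distrib)
  have "g ` cube_P = g ` f ` cube_P" using A(4) by simp
  also have "\<dots> = cube_P" by (simp add: image_image gf)
  finally have "g ` cube_P = cube_P" .
  moreover have "orthogonal_matrix (transpose A)" "det (transpose A) = 1"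
    using A(1,2) by (simp_all add: det_transpose)
  moreover have "\<forall>x. g x = transpose A *v x + - (transpose A *v b)"
    by (simp add: g_def)
  ultimately have "g \<in> rot_group"
    unfolding rot_group_def by blast
  with gf that show thesis by blast
qed

lemma edge_act_comp: "edge_act (f \<circ> g) S = edge_act f (edge_act g S)"
  unfolding edge_act_def by (simp add: image_comp image_image)

lemma edge_act_left_inverse: "(\<And>x. g (f x) = x) \<Longrightarrow> edge_act g (edge_act f S) = S"
  unfolding edge_act_def by (simp add: image_image)

lemma inj_edge_act: "inj f \<Longrightarrow> inj (edge_act f)"
  unfolding edge_act_def by (metis inj_image_eq_iff injI)

lemma rot_orbit_edge_act:
  assumes g: "g \<in> rot_group" shows "rot_orbit (edge_act g S) = rot_orbit S"
proof
  show "rot_orbit (edge_act g S) \<subseteq> rot_orbit S"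
    using rot_group_comp[OF _ g] by (auto simp: rot_orbit_def edge_act_comp[symmetric])
  obtain h where h: "h \<in> rot_group" "\<And>x. h (g x) = x" using rot_group_inverse[OF g] by blast
  show "rot_orbit S \<subseteq> rot_orbit (edge_act g S)"
  proof
    fix T assume "T \<in> rot_orbit S"
    then obtain f where f: "f \<in> rot_group" "T = edge_act f S" by (auto simp: rot_orbit_def)
    then have "T = edge_act (f \<circ> h) (edge_act g S)"
      by (simp add: edge_act_comp edge_act_left_inverse h(2))
    then show "T \<in> rot_orbit (edge_act g S)"
      using rot_group_comp[OF f(1) h(1)] by (auto simp: rot_orbit_def)
  qed
qed

lemma rotation_edge_perms_permutation:
  "p < 24 \<Longrightarrow> length (rotation_edge_perms ! p) = 12 \<and> set (rotation_edge_perms ! p) = {..<12}"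
proof -
  assume p: "p < 24"
  have "\<forall>q\<in>set rotation_edge_perms. sort q = [0..<12]"
    by (simp add: rotation_edge_perms_def upt_rec)
  then have "sort (rotation_edge_perms ! p) = [0..<12]" using p by simp
  then show ?thesis
    by (metis atLeast_upt length_sort length_upt minus_nat.diff_0 set_sort)
qed

lemma edge_act_rot_cube_E:
  assumes "f \<in> rot_group" shows "edge_act f cube_E = cube_E"
proof -
  obtain p where p: "p < 24" and f: "f = (\<lambda>x. rotation_matrices ! p *v x)"
    using assms rot_group_iff by blast
  have "edge_act f cube_E = (\<lambda>k. cube_edge (rotation_edge_perms ! p ! k)) ` {..<12}"
    unfolding edge_act_def cube_E_eq image_image f using rotation_matrices_cube_edge[OF p] by simp
  also have "\<dots> = cube_edge ` (\<lambda>k. rotation_edge_perms ! p ! k) ` {..<12}"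
    by (simp add: image_image)
  also have "(\<lambda>k. rotation_edge_perms ! p ! k) ` {..<12} = {..<12}"
    using rotation_edge_perms_permutation[OF p] nth_image[of 12 "rotation_edge_perms ! p"]
    by (simp add: atLeast0LessThan)
  finally show ?thesis unfolding cube_E_eq .
qed

lemma incident_vertices_edge_act: "incident_vertices (edge_act f S) = f ` incident_vertices S"
  unfolding incident_vertices_def edge_act_def by auto

lemma edge_graph_connected_edge_act:
  assumes "edge_graph_connected S" shows "edge_graph_connected (edge_act f S)"
  unfolding edge_graph_connected_def incident_vertices_edge_act
proof (intro ballI, elim imageE)
  fix u' v' u v
  assume "u \<in> incident_vertices S" "v \<in> incident_vertices S" and uv: "u' = f u" "v' = f v"
  then have "(u, v) \<in> {(x, y). {x, y} \<in> S}\<^sup>*"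
    using assms unfolding edge_graph_connected_def by blast
  then have "(f u, f v) \<in> {(x, y). {x, y} \<in> edge_act f S}\<^sup>*"
  proof (induction rule: rtrancl_induct)
    case (step y z)
    then have "{f y, f z} \<in> edge_act f S"
      unfolding edge_act_def by (auto intro: image_eqI[of _ _ "{y, z}"])
    with step.IH show ?case by (simp add: rtrancl.rtrancl_into_rtrancl)
  qed simp
  then show "(u', v') \<in> {(x, y). {x, y} \<in> edge_act f S}\<^sup>*" using uv by simp
qed

lemma non_planar_edge_act:
  assumes A: "orthogonal_matrix (A::real^3^3)" and S: "non_planar S"
  shows "non_planar (edge_act (\<lambda>x. A *v x) S)"
  unfolding non_planar_def incident_vertices_edge_act
proof
  assume "\<exists>a c. a \<noteq> 0 \<and> (\<lambda>x. A *v x) ` incident_vertices S \<subseteq> {x. a \<bullet> x = c}"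
  then obtain a c where a: "a \<noteq> 0" "(\<lambda>x. A *v x) ` incident_vertices S \<subseteq> {x. a \<bullet> x = c}"
    by blast
  have "a = (a v* A) v* transpose A"
    using A unfolding orthogonal_matrix_def by (metis vector_matrix_mul_assoc vector_matrix_mul_rid)
  then have "a v* A \<noteq> 0" using a(1) by (metis vector_matrix_mult_0)
  moreover have "incident_vertices S \<subseteq> {x. (a v* A) \<bullet> x = c}"
    using a(2) by (auto simp: dot_lmul_matrix)
  ultimately show False using S unfolding non_planar_def by blast
qed

lemma incomplete_open_cube_edge_act:
  assumes f: "f \<in> rot_group" and S: "incomplete_open_cube S"
  shows "incomplete_open_cube (edge_act f S)"
proof -
  obtain A :: "real^3^3" where A: "orthogonal_matrix A" "f = (\<lambda>x. A *v x)"
    using rot_group_linear[OF f] by metis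
  have inj: "inj (edge_act f)" using inj_edge_act[OF rot_group_inj[OF f]] .
  have E: "edge_act f cube_E = cube_E" using edge_act_rot_cube_E[OF f] .
  have S_sub: "S \<subseteq> cube_E" "S \<noteq> {}" "S \<noteq> cube_E"
    using S unfolding incomplete_open_cube_def by blast+
  have "edge_act f S \<subseteq> cube_E"
    using image_mono[OF S_sub(1), of "image f"] E unfolding edge_act_def by simp
  moreover have "edge_act f S \<noteq> cube_E"
    using S_sub(3) inj E by (metis inj_eq)
  moreover have "edge_act f S \<noteq> {}"
    using S_sub(2) unfolding edge_act_def by blast
  moreover have "edge_graph_connected (edge_act f S)"
    using S edge_graph_connected_edge_act unfolding incomplete_open_cube_def by blast
  moreover have "non_planar (edge_act f S)"
    using S non_planar_edge_act[OF A(1)] unfolding incomplete_open_cube_def A(2) by blast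
  ultimately show ?thesis
    by (simp add: incomplete_open_cube_def)
qed

section \<open>Edge sets as bit vectors\<close>

definition edge_set :: "bool list \<Rightarrow> (real^3) set set" where
  "edge_set xs = cube_edge ` {k. k < 12 \<and> xs ! k}"

definition permute_bits :: "nat list \<Rightarrow> bool list \<Rightarrow> bool list" where
  "permute_bits q xs = map ((!) xs) q"

definition bits_orbit :: "bool list \<Rightarrow> bool list set" where
  "bits_orbit xs = (\<lambda>q. permute_bits q xs) ` set rotation_edge_perms"

lemma edge_set_subset_cube_E: "edge_set xs \<subseteq> cube_E"
  unfolding edge_set_def cube_E_eq by auto

lemma edge_set_of_subset: "S \<subseteq> cube_E \<Longrightarrow> edge_set (map (\<lambda>k. cube_edge k \<in> S) [0..<12]) = S"
  unfolding edge_set_def cube_E_eq by auto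

lemma inj_on_edge_set: "inj_on edge_set {xs. length xs = 12}"
proof (rule inj_onI)
  fix xs ys assume xs: "xs \<in> {xs. length xs = 12}" and ys: "ys \<in> {xs. length xs = 12}"
    and eq: "edge_set xs = edge_set ys"
  have sub: "{k. k < 12 \<and> xs ! k} \<subseteq> {..<12}" "{k. k < 12 \<and> ys ! k} \<subseteq> {..<12}" by auto
  have "{k. k < 12 \<and> xs ! k} = {k. k < 12 \<and> ys ! k}"
    using eq unfolding edge_set_def by (simp add: inj_on_image_eq_iff[OF inj_on_cube_edge sub])
  then have "\<forall>k<12. xs ! k = ys ! k"
    unfolding set_eq_iff mem_Collect_eq by blast
  then show "xs = ys" using xs ys by (intro nth_equalityI) auto
qed

lemma edge_act_edge_set_permute_bits:
  assumes p: "p < 24"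
  shows "edge_act (\<lambda>x. rotation_matrices ! p *v x) (edge_set (permute_bits (rotation_edge_perms ! p) xs))
    = edge_set xs"
proof -
  let ?q = "rotation_edge_perms ! p"
  have q: "length ?q = 12" "set ?q = {..<12}" using rotation_edge_perms_permutation[OF p] by auto
  have "edge_act (\<lambda>x. rotation_matrices ! p *v x) (edge_set (permute_bits ?q xs))
      = (\<lambda>j. cube_edge (?q ! j)) ` {j. j < 12 \<and> xs ! (?q ! j)}"
    unfolding edge_act_def edge_set_def permute_bits_def image_image using q(1)
    by (intro image_cong) (auto simp: rotation_matrices_cube_edge[OF p])
  also have "\<dots> = cube_edge ` ((!) ?q ` {j. j < 12 \<and> xs ! (?q ! j)})"
    by (simp add: image_image)
  also have "(!) ?q ` {j. j < 12 \<and> xs ! (?q ! j)} = {k. k < 12 \<and> xs ! k}"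
    using q by (auto simp: set_conv_nth)
  finally show ?thesis unfolding edge_set_def .
qed

lemma rot_orbit_edge_set: "rot_orbit (edge_set xs) = edge_set ` bits_orbit xs"
proof
  show "rot_orbit (edge_set xs) \<subseteq> edge_set ` bits_orbit xs"
  proof
    fix T assume "T \<in> rot_orbit (edge_set xs)"
    then obtain f where f: "f \<in> rot_group" and T: "T = edge_act f (edge_set xs)"
      by (auto simp: rot_orbit_def)
    obtain g where g: "g \<in> rot_group" "\<And>x. g (f x) = x" using rot_group_inverse[OF f] by blast
    then obtain p where p: "p < 24" and g_eq: "g = (\<lambda>x. rotation_matrices ! p *v x)"
      using rot_group_iff by blast
    let ?ys = "permute_bits (rotation_edge_perms ! p) xs"
    have "edge_act g T = edge_set xs"
      using T edge_act_left_inverse g(2) by blast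
    also have "\<dots> = edge_act g (edge_set ?ys)"
      using edge_act_edge_set_permute_bits[OF p] g_eq by simp
    finally have "edge_act g T = edge_act g (edge_set ?ys)" .
    then have "T = edge_set ?ys"
      using inj_edge_act[OF rot_group_inj[OF g(1)]] by (simp add: inj_eq)
    moreover have "?ys \<in> bits_orbit xs"
      using p by (auto simp: bits_orbit_def)
    ultimately show "T \<in> edge_set ` bits_orbit xs" by blast
  qed
  show "edge_set ` bits_orbit xs \<subseteq> rot_orbit (edge_set xs)"
  proof
    fix T assume "T \<in> edge_set ` bits_orbit xs"
    then obtain p where p: "p < 24" and T: "T = edge_set (permute_bits (rotation_edge_perms ! p) xs)"
      by (auto simp: bits_orbit_def in_set_conv_nth)
    obtain g where g: "g \<in> rot_group" "\<And>x. g (rotation_matrices ! p *v x) = x"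
      using rot_group_inverse rot_group_iff p by blast
    have "edge_act g (edge_act (\<lambda>x. rotation_matrices ! p *v x) T) = T"
      by (rule edge_act_left_inverse) (rule g(2))
    then have "T = edge_act g (edge_set xs)"
      using edge_act_edge_set_permute_bits[OF p, of xs] T by simp
    with g(1) show "T \<in> rot_orbit (edge_set xs)" by (auto simp: rot_orbit_def)
  qed
qed

lemma bits_orbit_length: "ys \<in> bits_orbit xs \<Longrightarrow> length ys = 12"
proof -
  assume "ys \<in> bits_orbit xs"
  then obtain p where "p < 24" "ys = permute_bits (rotation_edge_perms ! p) xs"
    by (auto simp: bits_orbit_def in_set_conv_nth)
  then show ?thesis using rotation_edge_perms_permutation by (simp add: permute_bits_def)
qed

lemma inj_on_image_edge_set: "inj_on (image edge_set) (bits_orbit ` UNIV)"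
  by (rule inj_on_subset[OF inj_on_image_Pow[OF inj_on_edge_set]]) (use bits_orbit_length in auto)

lemma self_in_bits_orbit: "length xs = 12 \<Longrightarrow> xs \<in> bits_orbit xs"
proof -
  assume l: "length xs = 12"
  have "rotation_edge_perms ! 0 = [0..<12]"
    by (simp add: rotation_edge_perms_def upt_rec)
  then have "permute_bits (rotation_edge_perms ! 0) xs = xs"
    using map_nth[of xs] l by (simp add: permute_bits_def)
  moreover have "rotation_edge_perms ! 0 \<in> set rotation_edge_perms"
    by (simp add: rotation_edge_perms_def)
  ultimately show "xs \<in> bits_orbit xs"
    unfolding bits_orbit_def by (rule image_eqI[OF sym])
qed

lemma bits_orbit_eq:
  assumes "length xs = 12" "ys \<in> bits_orbit xs" shows "bits_orbit ys = bits_orbit xs"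
proof -
  have "edge_set ys \<in> rot_orbit (edge_set xs)"
    using assms(2) by (simp add: rot_orbit_edge_set)
  then obtain g where g: "g \<in> rot_group" "edge_set ys = edge_act g (edge_set xs)"
    by (auto simp: rot_orbit_def)
  have "edge_set ` bits_orbit ys = edge_set ` bits_orbit xs"
    by (simp flip: rot_orbit_edge_set add: g rot_orbit_edge_act)
  then show ?thesis
    by (rule inj_onD[OF inj_on_image_edge_set]) auto
qed

section \<open>Deciding incomplete open cubes\<close>

lemma list_ex_upt_iff: "list_ex P [0..<n] \<longleftrightarrow> (\<exists>k<n. P k)"
  by (auto simp: list_ex_iff)

lemma list_all_upt_iff: "list_all P [0..<n] \<longleftrightarrow> (\<forall>k<n. P k)"
  by (auto simp: list_all_iff)

definition incident_bits :: "bool list \<Rightarrow> bool list" where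
  "incident_bits xs = map (\<lambda>v. list_ex (\<lambda>k. xs ! k \<and> (fst (cube_edges ! k) = v \<or> snd (cube_edges ! k) = v))
     [0..<12]) [0..<8]"

definition incident_indices :: "bool list \<Rightarrow> nat set" where
  "incident_indices xs = {v. v < 8 \<and> incident_bits xs ! v}"

definition edge_rel :: "bool list \<Rightarrow> nat rel" where
  "edge_rel xs = {(a, b). \<exists>k<12. xs ! k \<and>
     (cube_edges ! k = (a, b) \<or> cube_edges ! k = (b, a))}"

definition reach_step :: "bool list \<Rightarrow> bool list \<Rightarrow> bool list" where
  "reach_step xs X = map (\<lambda>v. X ! v \<or> list_ex (\<lambda>k. xs ! k \<and>
     ((fst (cube_edges ! k) = v \<and> X ! snd (cube_edges ! k)) \<or>
      (snd (cube_edges ! k) = v \<and> X ! fst (cube_edges ! k)))) [0..<12]) [0..<8]"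

definition first_true :: "bool list \<Rightarrow> nat" where
  "first_true W = (case find ((!) W) [0..<8] of Some v \<Rightarrow> v | None \<Rightarrow> 0)"

definition reachable_bits :: "bool list \<Rightarrow> bool list" where
  "reachable_bits xs = (reach_step xs ^^ 8) (map (\<lambda>v. v = first_true (incident_bits xs)) [0..<8])"

definition connected_bits :: "bool list \<Rightarrow> bool" where
  "connected_bits xs = list_all (\<lambda>v. incident_bits xs ! v \<longrightarrow> reachable_bits xs ! v) [0..<8]"

lemma incident_bits_nth:
  "v < 8 \<Longrightarrow> incident_bits xs ! v \<longleftrightarrow> (\<exists>k<12. xs ! k \<and> (fst (cube_edges ! k) = v \<or> snd (cube_edges ! k) = v))"
  by (simp add: incident_bits_def list_ex_upt_iff)

lemma length_incident_bits [simp]: "length (incident_bits xs) = 8"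
  by (simp add: incident_bits_def)

lemma incident_vertices_edge_set: "incident_vertices (edge_set xs) = (!) cube_vertices ` incident_indices xs"
proof
  show "incident_vertices (edge_set xs) \<subseteq> (!) cube_vertices ` incident_indices xs"
  proof
    fix x assume "x \<in> incident_vertices (edge_set xs)"
    then obtain k where k: "k < 12" "xs ! k" "x \<in> cube_edge k"
      by (auto simp: incident_vertices_def edge_set_def)
    then have "x = cube_vertices ! fst (cube_edges ! k) \<or> x = cube_vertices ! snd (cube_edges ! k)"
      by (auto simp: cube_edge_def)
    moreover have "fst (cube_edges ! k) \<in> incident_indices xs" "snd (cube_edges ! k) \<in> incident_indices xs"
      using k cube_edges_nth_bounds[OF k(1)] by (auto simp: incident_indices_def incident_bits_nth)
    ultimately show "x \<in> (!) cube_vertices ` incident_indices xs" by auto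
  qed
  show "(!) cube_vertices ` incident_indices xs \<subseteq> incident_vertices (edge_set xs)"
  proof
    fix x assume "x \<in> (!) cube_vertices ` incident_indices xs"
    then obtain v where v: "v < 8" "incident_bits xs ! v" "x = cube_vertices ! v"
      by (auto simp: incident_indices_def)
    then obtain k where "k < 12" "xs ! k" "fst (cube_edges ! k) = v \<or> snd (cube_edges ! k) = v"
      using incident_bits_nth by auto
    then show "x \<in> incident_vertices (edge_set xs)"
      using v by (auto simp: incident_vertices_def edge_set_def cube_edge_def)
  qed
qed

lemma edge_rel_bounds: "(a, b) \<in> edge_rel xs \<Longrightarrow> a < 8 \<and> b < 8"
proof -
  assume "(a, b) \<in> edge_rel xs"
  then obtain k where "k < 12" "cube_edges ! k = (a, b) \<or> cube_edges ! k = (b, a)"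
    by (auto simp: edge_rel_def)
  then show ?thesis using cube_edges_nth_bounds[of k] by auto
qed

lemma sym_edge_rel: "sym (edge_rel xs)"
  unfolding edge_rel_def sym_def by blast

lemma edge_pairs_edge_set:
  "{(x, y). {x, y} \<in> edge_set xs} = map_prod ((!) cube_vertices) ((!) cube_vertices) ` edge_rel xs"
proof (intro subset_antisym subsetI)
  fix z assume "z \<in> {(x, y). {x, y} \<in> edge_set xs}"
  then obtain x y k where z: "z = (x, y)" and k: "k < 12" "xs ! k" "{x, y} = cube_edge k"
    by (auto simp: edge_set_def)
  obtain a b where ab: "cube_edges ! k = (a, b)" by fastforce
  then have "(x, y) = (cube_vertices ! a, cube_vertices ! b) \<or> (x, y) = (cube_vertices ! b, cube_vertices ! a)"
    using k(3) by (auto simp: cube_edge_def doubleton_eq_iff)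
  moreover have "(a, b) \<in> edge_rel xs" "(b, a) \<in> edge_rel xs"
    using k ab by (auto simp: edge_rel_def)
  ultimately show "z \<in> map_prod ((!) cube_vertices) ((!) cube_vertices) ` edge_rel xs"
    using z by force
next
  fix z assume "z \<in> map_prod ((!) cube_vertices) ((!) cube_vertices) ` edge_rel xs"
  then obtain a b k where z: "z = (cube_vertices ! a, cube_vertices ! b)"
    and k: "k < 12" "xs ! k" "cube_edges ! k = (a, b) \<or> cube_edges ! k = (b, a)"
    by (auto simp: edge_rel_def)
  then have "{cube_vertices ! a, cube_vertices ! b} = cube_edge k"
    by (auto simp: cube_edge_def)
  then show "z \<in> {(x, y). {x, y} \<in> edge_set xs}"
    using z k by (auto simp: edge_set_def)
qed

lemma rtrancl_map_prod_image_iff: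
  assumes inj: "inj_on g A" and R: "R \<subseteq> A \<times> A" and a: "a \<in> A" and b: "b \<in> A"
  shows "(g a, g b) \<in> (map_prod g g ` R)\<^sup>* \<longleftrightarrow> (a, b) \<in> R\<^sup>*"
proof
  assume "(a, b) \<in> R\<^sup>*"
  then show "(g a, g b) \<in> (map_prod g g ` R)\<^sup>*"
  proof (induction rule: rtrancl_induct)
    case (step y z)
    then have "(g y, g z) \<in> map_prod g g ` R" by force
    with step.IH show ?case by (rule rtrancl_into_rtrancl)
  qed simp
next
  have "\<exists>b'\<in>A. y = g b' \<and> (a', b') \<in> R\<^sup>*"
    if "(x, y) \<in> (map_prod g g ` R)\<^sup>*" "a' \<in> A" "x = g a'" for x y a'
    using that(1)
  proof (induction rule: rtrancl_induct)
    case (step y z)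
    then obtain b' where b': "b' \<in> A" "y = g b'" "(a', b') \<in> R\<^sup>*" by blast
    obtain c d where cd: "(c, d) \<in> R" "y = g c" "z = g d" using step.hyps(2) by auto
    have "c = b'" using inj b' cd R by (auto dest: inj_onD)
    then show ?case using b'(3) cd R by (blast intro: rtrancl_into_rtrancl)
  qed (use that in blast)
  moreover assume "(g a, g b) \<in> (map_prod g g ` R)\<^sup>*"
  ultimately obtain b' where "b' \<in> A" "g b = g b'" "(a, b') \<in> R\<^sup>*" using a by blast
  then show "(a, b) \<in> R\<^sup>*" using inj b by (metis inj_onD)
qed

lemma rtrancl_map_prod_image_all_iff:
  assumes "inj_on g A" "R \<subseteq> A \<times> A" "W \<subseteq> A"
  shows "(\<forall>u\<in>g ` W. \<forall>v\<in>g ` W. (u, v) \<in> (map_prod g g ` R)\<^sup>*) \<longleftrightarrow> (\<forall>a\<in>W. \<forall>b\<in>W. (a, b) \<in> R\<^sup>*)"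
  using rtrancl_map_prod_image_iff[OF assms(1,2)] assms(3) by (simp add: subset_iff)
lemma edge_graph_connected_edge_set_iff:
  "edge_graph_connected (edge_set xs) \<longleftrightarrow> (\<forall>a\<in>incident_indices xs. \<forall>b\<in>incident_indices xs. (a, b) \<in> (edge_rel xs)\<^sup>*)"
proof -
  have inj: "inj_on ((!) cube_vertices) {..<8}"
    by (auto intro: inj_onI simp: cube_vertices_nth_eq_iff)
  have W: "incident_indices xs \<subseteq> {..<8}" and R: "edge_rel xs \<subseteq> {..<8} \<times> {..<8}"
    using edge_rel_bounds by (auto simp: incident_indices_def)
  show ?thesis
    unfolding edge_graph_connected_def incident_vertices_edge_set edge_pairs_edge_set
    by (rule rtrancl_map_prod_image_all_iff[OF inj R W])
qed

lemma funpow_card_fixpoint: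
  fixes F :: "'a set \<Rightarrow> 'a set"
  assumes infl: "\<And>A. A \<subseteq> F A" and bnd: "\<And>A. A \<subseteq> B \<Longrightarrow> F A \<subseteq> B"
    and fin: "finite B" and S0: "S0 \<subseteq> B"
  shows "F ((F ^^ card B) S0) = (F ^^ card B) S0"
proof (rule ccontr)
  assume ne: "F ((F ^^ card B) S0) \<noteq> (F ^^ card B) S0"
  have sub: "(F ^^ n) S0 \<subseteq> B" for n by (induction n) (use S0 bnd in auto)
  have stay: "(F ^^ m) S0 = (F ^^ n) S0" if "F ((F ^^ n) S0) = (F ^^ n) S0" "n \<le> m" for n m
    using that(2) by (induction m rule: dec_induct) (use that(1) in auto)
  have strict: "(F ^^ n) S0 \<subset> (F ^^ Suc n) S0" if "n \<le> card B" for n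
  proof -
    have "F ((F ^^ n) S0) \<noteq> (F ^^ n) S0"
    proof
      assume "F ((F ^^ n) S0) = (F ^^ n) S0"
      with stay[OF this that] ne show False by simp
    qed
    then show ?thesis
      using infl[of "(F ^^ n) S0"] unfolding funpow.simps(2) comp_def psubset_eq by blast
  qed
  have "n \<le> card ((F ^^ n) S0)" if "n \<le> Suc (card B)" for n
    using that
  proof (induction n)
    case (Suc n)
    have "n \<le> card B" using Suc.prems by simp
    then have "card ((F ^^ n) S0) < card ((F ^^ Suc n) S0)"
      by (intro psubset_card_mono[OF finite_subset[OF sub fin]] strict)
    with Suc show ?case by simp
  qed simp
  moreover have "card ((F ^^ Suc (card B)) S0) \<le> card B" using sub fin by (intro card_mono)
  ultimately show False by (metis not_less_eq_eq order_refl order_trans)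
qed

lemma funpow_Image_rtrancl:
  assumes fin: "finite B" and R: "R \<subseteq> B \<times> B" and u: "u \<in> B"
  shows "((\<lambda>A. A \<union> R `` A) ^^ card B) {u} = R\<^sup>* `` {u}"
proof
  let ?F = "\<lambda>A. A \<union> R `` A"
  have "(?F ^^ n) {u} \<subseteq> R\<^sup>* `` {u}" for n
    by (induction n) (auto intro: rtrancl_into_rtrancl)
  then show "(?F ^^ card B) {u} \<subseteq> R\<^sup>* `` {u}" .
  have stable: "?F ((?F ^^ card B) {u}) = (?F ^^ card B) {u}"
    by (rule funpow_card_fixpoint) (use R fin u in auto)
  have u_in: "u \<in> (?F ^^ n) {u}" for n by (induction n) auto
  show "R\<^sup>* `` {u} \<subseteq> (?F ^^ card B) {u}"
  proof
    fix v assume "v \<in> R\<^sup>* `` {u}"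
    then have "(u, v) \<in> R\<^sup>*" by simp
    then show "v \<in> (?F ^^ card B) {u}"
    proof (induction rule: rtrancl_induct)
      case (step y z)
      then have "z \<in> ?F ((?F ^^ card B) {u})" by blast
      then show ?case using stable by simp
    qed (rule u_in)
  qed
qed

lemma reach_step_nth:
  assumes "v < 8"
  shows "reach_step xs X ! v \<longleftrightarrow> X ! v \<or> (\<exists>w. (w, v) \<in> edge_rel xs \<and> X ! w)"
proof -
  have "(\<exists>k<12. xs ! k \<and> ((fst (cube_edges ! k) = v \<and> X ! snd (cube_edges ! k)) \<or>
        (snd (cube_edges ! k) = v \<and> X ! fst (cube_edges ! k)))) \<longleftrightarrow>
      (\<exists>w. (w, v) \<in> edge_rel xs \<and> X ! w)" (is "?L \<longleftrightarrow> ?R")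
  proof
    assume ?L
    then obtain k where k: "k < 12" "xs ! k" and
      "(fst (cube_edges ! k) = v \<and> X ! snd (cube_edges ! k)) \<or> (snd (cube_edges ! k) = v \<and> X ! fst (cube_edges ! k))"
      by blast
    then consider "cube_edges ! k = (v, snd (cube_edges ! k))" "X ! snd (cube_edges ! k)"
      | "cube_edges ! k = (fst (cube_edges ! k), v)" "X ! fst (cube_edges ! k)"
      by (metis prod.collapse)
    then show ?R using k unfolding edge_rel_def by cases blast+
  next
    assume ?R
    then obtain w k where "k < 12" "xs ! k" "cube_edges ! k = (w, v) \<or> cube_edges ! k = (v, w)" "X ! w"
      unfolding edge_rel_def by blast
    then show ?L by (intro exI[of _ k]) auto
  qed
  then show ?thesis using assms by (simp add: reach_step_def list_ex_upt_iff)
qed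

lemma reach_step_true_set:
  "{v. v < 8 \<and> reach_step xs X ! v} = {v. v < 8 \<and> X ! v} \<union> edge_rel xs `` {v. v < 8 \<and> X ! v}"
  (is "?S = ?A \<union> _")
proof (intro set_eqI iffI)
  fix v assume "v \<in> ?S"
  then have "v < 8" "X ! v \<or> (\<exists>w. (w, v) \<in> edge_rel xs \<and> X ! w)"
    by (auto simp: reach_step_nth)
  then show "v \<in> ?A \<union> edge_rel xs `` ?A" using edge_rel_bounds by blast
next
  fix v assume "v \<in> ?A \<union> edge_rel xs `` ?A"
  then have "v < 8" "X ! v \<or> (\<exists>w. (w, v) \<in> edge_rel xs \<and> X ! w)"
    using edge_rel_bounds by blast+
  then show "v \<in> ?S" by (simp add: reach_step_nth)
qed

lemma reachable_bits_nth:
  assumes v: "v < 8"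
  shows "reachable_bits xs ! v \<longleftrightarrow> (first_true (incident_bits xs), v) \<in> (edge_rel xs)\<^sup>*"
proof -
  let ?u = "first_true (incident_bits xs)"
  let ?F = "\<lambda>A. A \<union> edge_rel xs `` A"
  have u: "?u < 8" by (auto simp: first_true_def split: option.split simp: find_Some_iff)
  have "{v. v < 8 \<and> (reach_step xs ^^ n) X ! v} = (?F ^^ n) {v. v < 8 \<and> X ! v}" for n X
    by (induction n) (simp_all add: reach_step_true_set)
  moreover have "{v. v < 8 \<and> map (\<lambda>v. v = ?u) [0..<8] ! v} = {?u}"
    using u by auto
  ultimately have "{v. v < 8 \<and> reachable_bits xs ! v} = (?F ^^ card {..<8::nat}) {?u}"
    unfolding reachable_bits_def by simp
  also have "\<dots> = (edge_rel xs)\<^sup>* `` {?u}"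
    using edge_rel_bounds u by (intro funpow_Image_rtrancl) auto
  finally show ?thesis using v by blast
qed

lemma first_true_incident:
  assumes "\<exists>v<8. W ! v" shows "first_true W < 8 \<and> W ! first_true W"
  using assms by (auto simp: first_true_def find_None_iff find_Some_iff split: option.split)

lemma edge_graph_connected_edge_set_iff_connected_bits:
  assumes ne: "list_ex id xs" and l: "length xs = 12"
  shows "edge_graph_connected (edge_set xs) \<longleftrightarrow> connected_bits xs"
proof -
  let ?u = "first_true (incident_bits xs)"
  let ?R = "(edge_rel xs)\<^sup>*"
  obtain k where k: "k < 12" "xs ! k" using ne l by (auto simp: list_ex_length)
  then have "fst (cube_edges ! k) \<in> incident_indices xs"
    using cube_edges_nth_bounds[OF k(1)] by (auto simp: incident_indices_def incident_bits_nth)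
  then have u: "?u \<in> incident_indices xs"
    using first_true_incident[of "incident_bits xs"] by (auto simp: incident_indices_def)
  have "(\<forall>a\<in>incident_indices xs. \<forall>b\<in>incident_indices xs. (a, b) \<in> ?R) \<longleftrightarrow>
      (\<forall>v\<in>incident_indices xs. (?u, v) \<in> ?R)"
  proof
    assume "\<forall>v\<in>incident_indices xs. (?u, v) \<in> ?R"
    then have "(a, ?u) \<in> ?R" "(?u, b) \<in> ?R" if "a \<in> incident_indices xs" "b \<in> incident_indices xs" for a b
      using that symD[OF sym_rtrancl[OF sym_edge_rel]] by blast+
    then show "\<forall>a\<in>incident_indices xs. \<forall>b\<in>incident_indices xs. (a, b) \<in> ?R"
      by (blast intro: rtrancl_trans)
  qed (use u in blast)
  also have "\<dots> \<longleftrightarrow> connected_bits xs"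
    unfolding connected_bits_def list_all_iff incident_indices_def using reachable_bits_nth by auto
  finally show ?thesis unfolding edge_graph_connected_edge_set_iff .
qed

text \<open>The twelve planes through four vertices: six faces and six diagonal rectangles.\<close>
definition vertex_planes :: "(nat list \<times> (real^3) \<times> real) list" where
  "vertex_planes = [([1,3,5,7],vector[1,0,0],1),
    ([0,2,4,6],vector[1,0,0],-1),
    ([2,3,6,7],vector[0,1,0],1),
    ([0,1,4,5],vector[0,1,0],-1),
    ([4,5,6,7],vector[0,0,1],1),
    ([0,1,2,3],vector[0,0,1],-1),
    ([0,3,4,7],vector[1,-1,0],0),
    ([1,2,5,6],vector[1,1,0],0),
    ([0,2,5,7],vector[1,0,-1],0),
    ([1,3,4,6],vector[1,0,1],0),
    ([0,1,6,7],vector[0,1,-1],0),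
    ([2,3,4,5],vector[0,1,1],0)]"

definition within_vertex_plane :: "bool list \<Rightarrow> bool" where
  "within_vertex_plane W = list_ex (\<lambda>(R, a, c). list_all (\<lambda>i. W ! i \<longrightarrow> i \<in> set R) [0..<8]) vertex_planes"

definition noncoplanar_quads :: "nat list list" where
  "noncoplanar_quads = [[0,1,2,4],[0,1,2,5],[0,1,2,6],[0,1,2,7],[0,1,3,4],[0,1,3,5],[0,1,3,6],[0,1,3,7],[0,1,4,6],[0,1,4,7],
    [0,1,5,6],[0,1,5,7],[0,2,3,4],[0,2,3,5],[0,2,3,6],[0,2,3,7],[0,2,4,5],[0,2,4,7],[0,2,5,6],[0,2,6,7],
    [0,3,4,5],[0,3,4,6],[0,3,5,6],[0,3,5,7],[0,3,6,7],[0,4,5,6],[0,4,5,7],[0,4,6,7],[0,5,6,7],[1,2,3,4],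
    [1,2,3,5],[1,2,3,6],[1,2,3,7],[1,2,4,5],[1,2,4,6],[1,2,4,7],[1,2,5,7],[1,2,6,7],[1,3,4,5],[1,3,4,7],
    [1,3,5,6],[1,3,6,7],[1,4,5,6],[1,4,5,7],[1,4,6,7],[1,5,6,7],[2,3,4,6],[2,3,4,7],[2,3,5,6],[2,3,5,7],
    [2,4,5,6],[2,4,5,7],[2,4,6,7],[2,5,6,7],[3,4,5,6],[3,4,5,7],[3,4,6,7],[3,5,6,7]]"

definition has_noncoplanar_quad :: "bool list \<Rightarrow> bool" where
  "has_noncoplanar_quad W = list_ex (list_all ((!) W)) noncoplanar_quads"

lemma vertex_planes_equations:
  "(R, a, c) \<in> set vertex_planes \<Longrightarrow> a \<noteq> 0 \<and> (\<forall>i\<in>set R. a \<bullet> cube_vertices ! i = c)"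
  unfolding vertex_planes_def
  by (auto simp: cube_vertices_def inner_vec_def sum_3 vec3_eq_iff)

lemma noncoplanar_quads_bounds: "Q \<in> set noncoplanar_quads \<Longrightarrow> i \<in> set Q \<Longrightarrow> i < 8"
  unfolding noncoplanar_quads_def by auto

lemma noncoplanar_quads_not_coplanar:
  "Q \<in> set noncoplanar_quads \<Longrightarrow> (\<forall>i\<in>set Q. a \<bullet> cube_vertices ! i = c) \<Longrightarrow> a = 0"
  unfolding noncoplanar_quads_def
  apply (simp only: set_simps insert_iff empty_iff)
  apply (elim disjE; simp add: cube_vertices_def inner_vec_def sum_3 vec3_eq_iff; linarith)
  done

text \<open>Closed forms on symbolic arguments: rewriting with them evaluates these functions on concrete
  bit vectors without any list indexing.\<close>
lemma has_noncoplanar_quad_expand: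
  "has_noncoplanar_quad [w0,w1,w2,w3,w4,w5,w6,w7] =
    ((w0 \<and> w1 \<and> w2 \<and> w4) \<or> (w0 \<and> w1 \<and> w2 \<and> w5) \<or> (w0 \<and> w1 \<and> w2 \<and> w6) \<or> (w0 \<and> w1 \<and> w2 \<and> w7) \<or>
    (w0 \<and> w1 \<and> w3 \<and> w4) \<or> (w0 \<and> w1 \<and> w3 \<and> w5) \<or> (w0 \<and> w1 \<and> w3 \<and> w6) \<or> (w0 \<and> w1 \<and> w3 \<and> w7) \<or>
    (w0 \<and> w1 \<and> w4 \<and> w6) \<or> (w0 \<and> w1 \<and> w4 \<and> w7) \<or> (w0 \<and> w1 \<and> w5 \<and> w6) \<or> (w0 \<and> w1 \<and> w5 \<and> w7) \<or>
    (w0 \<and> w2 \<and> w3 \<and> w4) \<or> (w0 \<and> w2 \<and> w3 \<and> w5) \<or> (w0 \<and> w2 \<and> w3 \<and> w6) \<or> (w0 \<and> w2 \<and> w3 \<and> w7) \<or>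
    (w0 \<and> w2 \<and> w4 \<and> w5) \<or> (w0 \<and> w2 \<and> w4 \<and> w7) \<or> (w0 \<and> w2 \<and> w5 \<and> w6) \<or> (w0 \<and> w2 \<and> w6 \<and> w7) \<or>
    (w0 \<and> w3 \<and> w4 \<and> w5) \<or> (w0 \<and> w3 \<and> w4 \<and> w6) \<or> (w0 \<and> w3 \<and> w5 \<and> w6) \<or> (w0 \<and> w3 \<and> w5 \<and> w7) \<or>
    (w0 \<and> w3 \<and> w6 \<and> w7) \<or> (w0 \<and> w4 \<and> w5 \<and> w6) \<or> (w0 \<and> w4 \<and> w5 \<and> w7) \<or> (w0 \<and> w4 \<and> w6 \<and> w7) \<or>
    (w0 \<and> w5 \<and> w6 \<and> w7) \<or> (w1 \<and> w2 \<and> w3 \<and> w4) \<or> (w1 \<and> w2 \<and> w3 \<and> w5) \<or> (w1 \<and> w2 \<and> w3 \<and> w6) \<or>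
    (w1 \<and> w2 \<and> w3 \<and> w7) \<or> (w1 \<and> w2 \<and> w4 \<and> w5) \<or> (w1 \<and> w2 \<and> w4 \<and> w6) \<or> (w1 \<and> w2 \<and> w4 \<and> w7) \<or>
    (w1 \<and> w2 \<and> w5 \<and> w7) \<or> (w1 \<and> w2 \<and> w6 \<and> w7) \<or> (w1 \<and> w3 \<and> w4 \<and> w5) \<or> (w1 \<and> w3 \<and> w4 \<and> w7) \<or>
    (w1 \<and> w3 \<and> w5 \<and> w6) \<or> (w1 \<and> w3 \<and> w6 \<and> w7) \<or> (w1 \<and> w4 \<and> w5 \<and> w6) \<or> (w1 \<and> w4 \<and> w5 \<and> w7) \<or>
    (w1 \<and> w4 \<and> w6 \<and> w7) \<or> (w1 \<and> w5 \<and> w6 \<and> w7) \<or> (w2 \<and> w3 \<and> w4 \<and> w6) \<or> (w2 \<and> w3 \<and> w4 \<and> w7) \<or>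
    (w2 \<and> w3 \<and> w5 \<and> w6) \<or> (w2 \<and> w3 \<and> w5 \<and> w7) \<or> (w2 \<and> w4 \<and> w5 \<and> w6) \<or> (w2 \<and> w4 \<and> w5 \<and> w7) \<or>
    (w2 \<and> w4 \<and> w6 \<and> w7) \<or> (w2 \<and> w5 \<and> w6 \<and> w7) \<or> (w3 \<and> w4 \<and> w5 \<and> w6) \<or> (w3 \<and> w4 \<and> w5 \<and> w7) \<or>
    (w3 \<and> w4 \<and> w6 \<and> w7) \<or> (w3 \<and> w5 \<and> w6 \<and> w7))"
  by (simp add: has_noncoplanar_quad_def noncoplanar_quads_def numeral_eq_Suc)

lemma within_vertex_plane_expand:
  "within_vertex_plane [w0,w1,w2,w3,w4,w5,w6,w7] =
    ((\<not> w0 \<and> \<not> w2 \<and> \<not> w4 \<and> \<not> w6) \<or> (\<not> w1 \<and> \<not> w3 \<and> \<not> w5 \<and> \<not> w7) \<or> (\<not> w0 \<and> \<not> w1 \<and> \<not> w4 \<and> \<not> w5) \<or>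
    (\<not> w2 \<and> \<not> w3 \<and> \<not> w6 \<and> \<not> w7) \<or> (\<not> w0 \<and> \<not> w1 \<and> \<not> w2 \<and> \<not> w3) \<or> (\<not> w4 \<and> \<not> w5 \<and> \<not> w6 \<and> \<not> w7) \<or>
    (\<not> w1 \<and> \<not> w2 \<and> \<not> w5 \<and> \<not> w6) \<or> (\<not> w0 \<and> \<not> w3 \<and> \<not> w4 \<and> \<not> w7) \<or> (\<not> w1 \<and> \<not> w3 \<and> \<not> w4 \<and> \<not> w6) \<or>
    (\<not> w0 \<and> \<not> w2 \<and> \<not> w5 \<and> \<not> w7) \<or> (\<not> w2 \<and> \<not> w3 \<and> \<not> w4 \<and> \<not> w5) \<or> (\<not> w0 \<and> \<not> w1 \<and> \<not> w6 \<and> \<not> w7))"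
  by (simp add: within_vertex_plane_def vertex_planes_def upt_rec)

lemma incident_bits_expand:
  "incident_bits [a0,a1,a2,a3,a4,a5,a6,a7,a8,a9,a10,a11] =
    [(a0 \<or> a1 \<or> a2),
     (a0 \<or> a3 \<or> a4),
     (a1 \<or> a5 \<or> a6),
     (a3 \<or> a5 \<or> a7),
     (a2 \<or> a8 \<or> a9),
     (a4 \<or> a8 \<or> a10),
     (a6 \<or> a9 \<or> a11),
     (a7 \<or> a10 \<or> a11)]"
  by (simp add: incident_bits_def cube_edges_def upt_rec numeral_eq_Suc)

lemma reach_step_expand:
  "reach_step [a0,a1,a2,a3,a4,a5,a6,a7,a8,a9,a10,a11] [x0,x1,x2,x3,x4,x5,x6,x7] =
    [(x0 \<or> (a0 \<and> x1) \<or> (a1 \<and> x2) \<or> (a2 \<and> x4)),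
     (x1 \<or> (a0 \<and> x0) \<or> (a3 \<and> x3) \<or> (a4 \<and> x5)),
     (x2 \<or> (a1 \<and> x0) \<or> (a5 \<and> x3) \<or> (a6 \<and> x6)),
     (x3 \<or> (a3 \<and> x1) \<or> (a5 \<and> x2) \<or> (a7 \<and> x7)),
     (x4 \<or> (a2 \<and> x0) \<or> (a8 \<and> x5) \<or> (a9 \<and> x6)),
     (x5 \<or> (a4 \<and> x1) \<or> (a8 \<and> x4) \<or> (a10 \<and> x7)),
     (x6 \<or> (a6 \<and> x2) \<or> (a9 \<and> x4) \<or> (a11 \<and> x7)),
     (x7 \<or> (a7 \<and> x3) \<or> (a10 \<and> x5) \<or> (a11 \<and> x6))]"
  by (simp add: reach_step_def cube_edges_def upt_rec numeral_eq_Suc)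

lemma vertex_bits_trichotomy:
  assumes "length W = 8"
  shows "has_noncoplanar_quad W \<or> within_vertex_plane W \<or> length (filter id W) \<le> 3"
proof -
  have "\<forall>W\<in>set (List.n_lists 8 [False, True]).
      has_noncoplanar_quad W \<or> within_vertex_plane W \<or> length (filter id W) \<le> 3"
    by (simp add: has_noncoplanar_quad_expand within_vertex_plane_expand numeral_eq_Suc)
  then show ?thesis using assms by (auto simp: set_n_lists)
qed

lemma finite_set_in_hyperplane:
  fixes P :: "'a::euclidean_space set"
  assumes fin: "finite P" and card: "card P \<le> DIM('a)"
  shows "\<exists>a c. a \<noteq> 0 \<and> P \<subseteq> {x. a \<bullet> x = c}"
proof (cases "P = {}")
  case True
  obtain b :: 'a where "b \<in> Basis" using nonempty_Basis by blast
  then show ?thesis using True nonzero_Basis by blast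
next
  case False
  then obtain p where p: "p \<in> P" by blast
  let ?D = "(\<lambda>x. x - p) ` (P - {p})"
  have "finite ?D" using fin by simp
  then have "dim ?D \<le> card ?D" by (rule real_vector.dim_le_card')
  also have "\<dots> \<le> card (P - {p})" using fin by (simp add: card_image_le)
  also have "\<dots> = card P - 1" using p fin by (simp add: card_Diff_singleton)
  also have "\<dots> < DIM('a)"
    using card card_gt_0_iff[of P] fin p by auto
  finally obtain a :: 'a where a: "a \<noteq> 0" "\<And>y. y \<in> span ?D \<Longrightarrow> orthogonal a y"
    using orthogonal_to_subspace_exists by blast
  have "a \<bullet> x = a \<bullet> p" if "x \<in> P" for x
  proof (cases "x = p")
    case False
    then have "x - p \<in> span ?D" using that by (intro span_base) auto
    then have "a \<bullet> (x - p) = 0" using a(2) by (simp add: orthogonal_def)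
    then show ?thesis by (simp add: inner_diff_right)
  qed simp
  then show ?thesis using a(1) by blast
qed

lemma incident_vertices_coplanar:
  assumes "\<not> has_noncoplanar_quad (incident_bits xs)"
  shows "\<exists>a c. a \<noteq> 0 \<and> (!) cube_vertices ` incident_indices xs \<subseteq> {x. a \<bullet> x = c}"
proof -
  have "within_vertex_plane (incident_bits xs) \<or> card (incident_indices xs) \<le> 3"
    using assms vertex_bits_trichotomy[of "incident_bits xs"]
    by (simp add: length_filter_conv_card incident_indices_def)
  then show ?thesis
  proof
    assume "within_vertex_plane (incident_bits xs)"
    then obtain R a c where R: "(R, a, c) \<in> set vertex_planes"
      "\<forall>i<8. incident_bits xs ! i \<longrightarrow> i \<in> set R"
      unfolding within_vertex_plane_def list_ex_iff list_all_upt_iff by auto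
    then have "incident_indices xs \<subseteq> set R" by (auto simp: incident_indices_def)
    then show ?thesis using vertex_planes_equations[OF R(1)] by blast
  next
    assume "card (incident_indices xs) \<le> 3"
    then have "card ((!) cube_vertices ` incident_indices xs) \<le> DIM(real^3)"
      using card_image_le[of "incident_indices xs" "(!) cube_vertices"] by (simp add: incident_indices_def)
    then show ?thesis by (intro finite_set_in_hyperplane) (simp_all add: incident_indices_def)
  qed
qed

lemma incident_vertices_not_coplanar:
  assumes "has_noncoplanar_quad (incident_bits xs)" and "a \<noteq> 0"
  shows "\<not> (!) cube_vertices ` incident_indices xs \<subseteq> {x. a \<bullet> x = c}"
proof
  obtain Q where Q: "Q \<in> set noncoplanar_quads" "\<forall>i\<in>set Q. incident_bits xs ! i"
    using assms(1) unfolding has_noncoplanar_quad_def list_ex_iff list_all_iff by blast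
  then have "set Q \<subseteq> incident_indices xs"
    using noncoplanar_quads_bounds[OF Q(1)] by (auto simp: incident_indices_def)
  moreover assume "(!) cube_vertices ` incident_indices xs \<subseteq> {x. a \<bullet> x = c}"
  ultimately have "\<forall>i\<in>set Q. a \<bullet> cube_vertices ! i = c" by blast
  with noncoplanar_quads_not_coplanar[OF Q(1)] assms(2) show False by blast
qed

lemma non_planar_edge_set_iff: "non_planar (edge_set xs) \<longleftrightarrow> has_noncoplanar_quad (incident_bits xs)"
  unfolding non_planar_def incident_vertices_edge_set
  using incident_vertices_coplanar incident_vertices_not_coplanar by blast

text \<open>The nested conditionals make the simplifier evaluate the conditions first.\<close>
definition good_bits :: "bool list \<Rightarrow> bool" where
  "good_bits xs = (if list_ex id xs \<and> \<not> list_all id xs then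
     (if connected_bits xs then has_noncoplanar_quad (incident_bits xs) else False) else False)"

lemma incomplete_open_cube_edge_set_iff:
  assumes l: "length xs = 12"
  shows "incomplete_open_cube (edge_set xs) \<longleftrightarrow> good_bits xs"
proof -
  have ne: "edge_set xs \<noteq> {} \<longleftrightarrow> list_ex id xs"
    using l unfolding edge_set_def list_ex_length by auto
  have sub: "{k. k < 12 \<and> xs ! k} \<subseteq> {..<12}" by auto
  have "edge_set xs = cube_E \<longleftrightarrow> {k. k < 12 \<and> xs ! k} = {..<12}"
    unfolding edge_set_def cube_E_eq by (simp add: inj_on_image_eq_iff[OF inj_on_cube_edge sub])
  also have "\<dots> \<longleftrightarrow> list_all id xs" using l unfolding list_all_length by auto
  finally show ?thesis
    using edge_set_subset_cube_E ne edge_graph_connected_edge_set_iff_connected_bits[OF _ l]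
      non_planar_edge_set_iff
    unfolding incomplete_open_cube_def good_bits_def by auto
qed

section \<open>Counting orbits\<close>

fun lex_le :: "bool list \<Rightarrow> bool list \<Rightarrow> bool" where
  "lex_le [] ys = True"
| "lex_le (x # xs) [] = True"
| "lex_le (x # xs) (y # ys) = (if x = y then lex_le xs ys else y)"

lemma lex_le_iff_less_eq: "length xs = length ys \<Longrightarrow> lex_le xs ys \<longleftrightarrow> xs \<le> ys"
proof (induction xs arbitrary: ys)
  case (Cons x xs)
  then obtain y ys' where "ys = y # ys'" "length xs = length ys'" by (cases ys) auto
  with Cons.IH show ?case by (auto simp: less_bool_def)
qed simp

fun lex_le_all :: "bool list \<Rightarrow> bool list list \<Rightarrow> bool" where
  "lex_le_all xs [] = True"
| "lex_le_all xs (ys # yss) = (if lex_le xs ys then lex_le_all xs yss else False)"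

definition orbit_min_bits :: "bool list \<Rightarrow> bool" where
  "orbit_min_bits xs = lex_le_all xs (map (\<lambda>q. permute_bits q xs) rotation_edge_perms)"

lemma orbit_min_bits_iff:
  assumes "length xs = 12" shows "orbit_min_bits xs \<longleftrightarrow> (\<forall>ys\<in>bits_orbit xs. xs \<le> ys)"
proof -
  have "lex_le_all xs yss \<longleftrightarrow> (\<forall>ys\<in>set yss. lex_le xs ys)" for yss
    by (induction yss) auto
  then show ?thesis
    unfolding orbit_min_bits_def bits_orbit_def
    using lex_le_iff_less_eq assms bits_orbit_length[unfolded bits_orbit_def] by auto
qed

lemma card_orbits_eq_card_least:
  fixes orb :: "'a::linorder \<Rightarrow> 'a set"
  assumes fin: "finite X" and orb_X: "\<And>x. x \<in> X \<Longrightarrow> orb x \<subseteq> X"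
    and self: "\<And>x. x \<in> X \<Longrightarrow> x \<in> orb x"
    and eq: "\<And>x y. x \<in> X \<Longrightarrow> y \<in> orb x \<Longrightarrow> orb y = orb x"
  shows "card (orb ` X) = card {x \<in> X. \<forall>y\<in>orb x. x \<le> y}"
proof -
  let ?L = "{x \<in> X. \<forall>y\<in>orb x. x \<le> y}"
  have "orb ` X \<subseteq> orb ` ?L"
  proof
    fix C assume "C \<in> orb ` X"
    then obtain x where x: "x \<in> X" "C = orb x" by blast
    have fin_orb: "finite (orb x)" using fin orb_X[OF x(1)] by (rule finite_subset[rotated])
    define m where "m = Min (orb x)"
    have m: "m \<in> orb x" unfolding m_def using fin_orb self[OF x(1)] by (intro Min_in) auto
    then have "orb m = orb x" "m \<in> X" using eq[OF x(1)] orb_X[OF x(1)] by auto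
    moreover have "\<forall>y\<in>orb x. m \<le> y" unfolding m_def using fin_orb by simp
    ultimately show "C \<in> orb ` ?L" using x(2) by (intro image_eqI[where x = m]) auto
  qed
  then have eq: "orb ` ?L = orb ` X" by auto
  have inj: "inj_on orb ?L"
  proof (rule inj_onI)
    fix x x' assume x: "x \<in> ?L" and x': "x' \<in> ?L" and e: "orb x = orb x'"
    have "x' \<in> orb x" "x \<in> orb x'" using self x x' e by auto
    then show "x = x'" using x x' by (auto intro: antisym)
  qed
  show ?thesis using card_image[OF inj] by (simp add: eq)
qed

fun count_ext :: "(bool list \<Rightarrow> bool) \<Rightarrow> nat \<Rightarrow> bool list \<Rightarrow> nat" where
  "count_ext P 0 pre = (if P pre then 1 else 0)"
| "count_ext P (Suc n) pre = count_ext P n (pre @ [False]) + count_ext P n (pre @ [True])"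

lemma finite_bool_lists_length: "finite {xs :: bool list. length xs = n}"
  using finite_lists_length_eq[of "UNIV :: bool set" n] by simp

lemma count_ext_eq_card: "count_ext P n pre = card {xs. length xs = n \<and> P (pre @ xs)}"
proof (induction n arbitrary: pre)
  case 0
  then show ?case by (simp add: Collect_conv_if)
next
  case (Suc n)
  let ?A = "\<lambda>b. {xs. length xs = n \<and> P ((pre @ [b]) @ xs)}"
  have fin: "finite (?A b)" for b
    by (rule finite_subset[OF _ finite_bool_lists_length[of n]]) auto
  have "{xs. length xs = Suc n \<and> P (pre @ xs)} = Cons False ` ?A False \<union> Cons True ` ?A True"
  proof (intro set_eqI iffI)
    fix xs assume "xs \<in> {xs. length xs = Suc n \<and> P (pre @ xs)}"
    then obtain b ys where "xs = b # ys" "length ys = n" "P (pre @ b # ys)"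
      by (auto simp: length_Suc_conv)
    then show "xs \<in> Cons False ` ?A False \<union> Cons True ` ?A True" by (cases b) auto
  qed auto
  moreover have "card (Cons False ` ?A False \<union> Cons True ` ?A True) =
      card (Cons False ` ?A False) + card (Cons True ` ?A True)"
    by (rule card_Un_disjoint) (use fin in auto)
  ultimately have "card {xs. length xs = Suc n \<and> P (pre @ xs)} = card (?A False) + card (?A True)"
    by (simp add: card_image)
  then show ?case by (simp add: Suc.IH)
qed

definition good_orbit_rep :: "bool list \<Rightarrow> bool" where
  "good_orbit_rep xs = (if orbit_min_bits xs then good_bits xs else False)"

text \<open>Nested conditionals, so that the simplifier stops at the first failing comparison.\<close>
lemma orbit_min_bits_expand:
  "orbit_min_bits [a0,a1,a2,a3,a4,a5,a6,a7,a8,a9,a10,a11] = (let xs = [a0,a1,a2,a3,a4,a5,a6,a7,a8,a9,a10,a11] in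
     if lex_le xs [a0,a1,a2,a3,a4,a5,a6,a7,a8,a9,a10,a11] then
     if lex_le xs [a11,a9,a6,a10,a7,a8,a2,a4,a5,a1,a3,a0] then
     if lex_le xs [a8,a10,a4,a9,a2,a11,a7,a6,a0,a3,a1,a5] then
     if lex_le xs [a5,a3,a7,a1,a6,a0,a4,a2,a11,a10,a9,a8] then
     if lex_le xs [a8,a2,a9,a4,a10,a0,a1,a3,a11,a6,a7,a5] then
     if lex_le xs [a5,a6,a1,a7,a3,a11,a9,a10,a0,a2,a4,a8] then
     if lex_le xs [a0,a4,a3,a2,a1,a8,a10,a9,a5,a7,a6,a11] then
     if lex_le xs [a11,a7,a10,a6,a9,a5,a3,a1,a8,a4,a2,a0] then
     if lex_le xs [a9,a8,a2,a11,a6,a10,a4,a7,a1,a0,a5,a3] then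
     if lex_le xs [a1,a5,a6,a0,a2,a3,a7,a4,a9,a11,a8,a10] then
     if lex_le xs [a3,a0,a4,a5,a7,a1,a2,a6,a10,a8,a11,a9] then
     if lex_le xs [a10,a11,a7,a8,a4,a9,a6,a2,a3,a5,a0,a1] then
     if lex_le xs [a2,a0,a1,a8,a9,a4,a3,a10,a6,a5,a11,a7] then
     if lex_le xs [a6,a11,a9,a5,a1,a7,a10,a3,a2,a8,a0,a4] then
     if lex_le xs [a4,a8,a10,a0,a3,a2,a9,a1,a7,a11,a5,a6] then
     if lex_le xs [a7,a5,a3,a11,a10,a6,a1,a9,a4,a0,a8,a2] then
     if lex_le xs [a1,a2,a0,a6,a5,a9,a8,a11,a3,a4,a7,a10] then
     if lex_le xs [a9,a6,a11,a2,a8,a1,a5,a0,a10,a7,a4,a3] then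
     if lex_le xs [a10,a4,a8,a7,a11,a3,a0,a5,a9,a2,a6,a1] then
     if lex_le xs [a3,a7,a5,a4,a0,a10,a11,a8,a1,a6,a2,a9] then
     if lex_le xs [a2,a9,a8,a1,a0,a6,a11,a5,a4,a10,a3,a7] then
     if lex_le xs [a6,a1,a5,a9,a11,a2,a0,a8,a7,a3,a10,a4] then
     if lex_le xs [a4,a3,a0,a10,a8,a7,a5,a11,a2,a1,a9,a6] then
     if lex_le xs [a7,a10,a11,a3,a5,a4,a8,a0,a6,a9,a1,a2] then
     True else False else False else False else False else False else False else False else False else False else False else False else False else False else False else False else False else False else False else False else False else False else False else False else False)"
  unfolding Let_def
  by (simp only: orbit_min_bits_def permute_bits_def rotation_edge_perms_def list.map
      numeral_eq_Suc pred_numeral_simps BitM.simps One_nat_def nth_Cons_0 nth_Cons_Suc lex_le_all.simps)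

lemma bits_orbit_good:
  assumes "length xs = 12" "good_bits xs" "ys \<in> bits_orbit xs" shows "good_bits ys"
proof -
  have "edge_set ys \<in> rot_orbit (edge_set xs)"
    using assms(3) by (simp add: rot_orbit_edge_set)
  then obtain g where "g \<in> rot_group" "edge_set ys = edge_act g (edge_set xs)"
    by (auto simp: rot_orbit_def)
  then have "incomplete_open_cube (edge_set ys)"
    using assms(1,2) incomplete_open_cube_edge_act incomplete_open_cube_edge_set_iff by metis
  then show ?thesis
    using assms(3) bits_orbit_length incomplete_open_cube_edge_set_iff by blast
qed

lemma incomplete_open_cube_orbits:
  "{rot_orbit S | S. incomplete_open_cube S} =
    image edge_set ` bits_orbit ` {xs. length xs = 12 \<and> good_bits xs}"
proof (intro subset_antisym subsetI)
  fix C assume "C \<in> {rot_orbit S | S. incomplete_open_cube S}"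
  then obtain S where S: "C = rot_orbit S" "incomplete_open_cube S" by blast
  define xs where "xs = map (\<lambda>k. cube_edge k \<in> S) [0..<12]"
  have xs: "length xs = 12" "edge_set xs = S"
    using S(2) edge_set_of_subset by (simp_all add: xs_def incomplete_open_cube_def)
  then have "good_bits xs" using S(2) incomplete_open_cube_edge_set_iff by blast
  then show "C \<in> image edge_set ` bits_orbit ` {xs. length xs = 12 \<and> good_bits xs}"
    using xs S(1) rot_orbit_edge_set by blast
next
  fix C assume "C \<in> image edge_set ` bits_orbit ` {xs. length xs = 12 \<and> good_bits xs}"
  then obtain xs where "length xs = 12" "good_bits xs" "C = rot_orbit (edge_set xs)"
    using rot_orbit_edge_set by auto
  then show "C \<in> {rot_orbit S | S. incomplete_open_cube S}"
    using incomplete_open_cube_edge_set_iff by blast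
qed

lemma count_good_orbit_reps: "count_ext good_orbit_rep 12 [] = 122"
  by (simp add: good_orbit_rep_def orbit_min_bits_expand Let_def good_bits_def
      connected_bits_def reachable_bits_def incident_bits_expand reach_step_expand first_true_def
      has_noncoplanar_quad_expand numeral_eq_Suc upt_rec)

theorem mainTheorem2:
  shows "card {rot_orbit S | S. incomplete_open_cube S} = 122"
proof -
  let ?G = "{xs. length xs = 12 \<and> good_bits xs}"
  have inj: "inj_on (image edge_set) (bits_orbit ` ?G)"
    using inj_on_image_edge_set by (rule inj_on_subset) blast
  have "card {rot_orbit S | S. incomplete_open_cube S} = card (bits_orbit ` ?G)"
    unfolding incomplete_open_cube_orbits by (rule card_image[OF inj])
  also have "\<dots> = card {xs \<in> ?G. \<forall>ys\<in>bits_orbit xs. xs \<le> ys}"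
  proof (rule card_orbits_eq_card_least)
    show "finite ?G" by (rule finite_subset[OF _ finite_bool_lists_length[of 12]]) auto
    show "bits_orbit xs \<subseteq> ?G" if "xs \<in> ?G" for xs
      using that bits_orbit_length bits_orbit_good by blast
    show "xs \<in> bits_orbit xs" if "xs \<in> ?G" for xs
      using that self_in_bits_orbit by blast
    show "bits_orbit ys = bits_orbit xs" if "xs \<in> ?G" "ys \<in> bits_orbit xs" for xs ys
      using that bits_orbit_eq by blast
  qed
  also have "{xs \<in> ?G. \<forall>ys\<in>bits_orbit xs. xs \<le> ys} = {xs. length xs = 12 \<and> good_orbit_rep xs}"
    using orbit_min_bits_iff by (auto simp: good_orbit_rep_def)
  also have "card \<dots> = 122"
    using count_ext_eq_card[of good_orbit_rep 12 "[]"] count_good_orbit_reps by simp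
  finally show ?thesis .
qed

end
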